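(* A finite distributive lattice $\mathcal{L}$ is a tree lattice if and only if it is an honest lattice.
   Context: An element $x$ of $\mathcal{L}$ is join-irreducible if $x = y \vee z$ implies $x = y$ or $x = z$; $J(\mathcal{L})$ is the poset of join-irreducibles with the induced order. $\mathcal{L}$ is a tree lattice if the Hasse diagram of $J(\mathcal{L})$ is a tree. $\mathcal{L}$ is honest if for all $\alpha, \beta \in J(\mathcal{L})$ such that $\alpha$ covers $\beta$ in the poset $J(\mathcal{L})$, $\alpha$ also covers $\beta$ in $\mathcal{L}$ (where $\alpha$ covers $\beta$ means $\alpha > \beta$ and no element lies strictly between them). *)

theory Defs
  imports Main
begin

definition join_irreducible :: "'a::lattice \<Rightarrow> bool" where
  "join_irreducible x \<longleftrightarrow> (\<forall>y z. x = sup y z \<longrightarrow> x = y \<or> x = z)"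

definition JI :: "'a::lattice set" where
  "JI = {x. join_irreducible x}"

definition covers_in :: "'a::order set \<Rightarrow> 'a \<Rightarrow> 'a \<Rightarrow> bool" where
  "covers_in S a b \<longleftrightarrow> a \<in> S \<and> b \<in> S \<and> b < a \<and> \<not> (\<exists>c\<in>S. b < c \<and> c < a)"

definition hasse_adj :: "'a::order set \<Rightarrow> 'a \<Rightarrow> 'a \<Rightarrow> bool" where
  "hasse_adj S x y \<longleftrightarrow> covers_in S x y \<or> covers_in S y x"

definition ugraph_connected :: "'a set \<Rightarrow> ('a \<Rightarrow> 'a \<Rightarrow> bool) \<Rightarrow> bool" where
  "ugraph_connected V E \<longleftrightarrow>
     (\<forall>x\<in>V. \<forall>y\<in>V. (x, y) \<in> {(u, v). u \<in> V \<and> v \<in> V \<and> E u v}\<^sup>*)"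

definition ugraph_has_cycle :: "'a set \<Rightarrow> ('a \<Rightarrow> 'a \<Rightarrow> bool) \<Rightarrow> bool" where
  "ugraph_has_cycle V E \<longleftrightarrow>
     (\<exists>vs. length vs \<ge> 3 \<and> distinct vs \<and> set vs \<subseteq> V \<and>
        (\<forall>i. Suc i < length vs \<longrightarrow> E (vs ! i) (vs ! Suc i)) \<and> E (last vs) (hd vs))"

definition ugraph_tree :: "'a set \<Rightarrow> ('a \<Rightarrow> 'a \<Rightarrow> bool) \<Rightarrow> bool" where
  "ugraph_tree V E \<longleftrightarrow> V \<noteq> {} \<and> ugraph_connected V E \<and> \<not> ugraph_has_cycle V E"

definition tree_lattice :: "'a::lattice itself \<Rightarrow> bool" where
  "tree_lattice _ \<longleftrightarrow> ugraph_tree (JI :: 'a set) (hasse_adj JI)"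

definition honest_lattice :: "'a::lattice itself \<Rightarrow> bool" where
  "honest_lattice _ \<longleftrightarrow>
     (\<forall>a b::'a. covers_in JI a b \<longrightarrow> covers_in UNIV a b)"

end

theory Submission
  imports Defs
begin

text \<open>
  The bottom element is join-irreducible in the sense used here, so \<open>J(L)\<close> is a finite poset
  with a least element. Its Hasse diagram is then always connected (walk down along covers),
  and it is acyclic exactly when every element covers at most one other: the maximal vertex of
  a cycle covers both of its neighbours, and conversely two lower covers of \<open>x\<close>, followed down
  to a maximal common lower bound, close up to a cycle through \<open>x\<close>. Finally, \<open>J(L)\<close> has unique
  lower covers iff \<open>L\<close> is honest: if \<open>a\<close> covers \<open>b \<noteq> c\<close> in \<open>J(L)\<close> and \<open>b\<close> in \<open>L\<close>, then
  \<open>a = b \<squnion> c\<close>, contradicting join-irreducibility; conversely every join-irreducible below an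
  element strictly between \<open>b\<close> and \<open>a\<close> lies below the unique lower cover \<open>b\<close> of \<open>a\<close>, and
  every element is the join of the join-irreducibles below it.
\<close>

lemma finite_less_induct[consumes 2, case_names less]:
  fixes S :: "'a::order set"
  assumes "finite S" "x \<in> S"
    and "\<And>x. x \<in> S \<Longrightarrow> (\<And>y. y \<in> S \<Longrightarrow> y < x \<Longrightarrow> P y) \<Longrightarrow> P x"
  shows "P x"
proof -
  have "wfp_on S (<)"
    using assms(1) by (intro strict_partial_order_wfp_on_finite_set) (auto intro: transp_onI)
  then show ?thesis using assms(2,3) by (rule wfp_on_induct)
qed

lemma lower_cover_exists_above:
  fixes S :: "'a::order set"
  assumes "finite S" "j \<in> S" "a \<in> S" "j < a"
  shows "\<exists>m. j \<le> m \<and> covers_in S a m"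
proof -
  obtain m where m: "m \<in> S" "m < a" "j \<le> m" and max: "\<forall>b\<in>S. b < a \<longrightarrow> m \<le> b \<longrightarrow> m = b"
    using finite_has_maximal2[of "{v\<in>S. v < a}" j] assms by auto
  have "covers_in S a m"
    unfolding covers_in_def using m max assms(3) by (metis less_le)
  with m show ?thesis by blast
qed

definition descending_cover_path :: "'a::order set \<Rightarrow> 'a \<Rightarrow> 'a \<Rightarrow> 'a list \<Rightarrow> bool" where
  "descending_cover_path S u w ps \<longleftrightarrow> hd ps = u \<and> last ps = w \<and> ps \<noteq> [] \<and> distinct ps
     \<and> set ps \<subseteq> S \<and> (\<forall>v\<in>set ps. w \<le> v \<and> v \<le> u) \<and> successively (covers_in S) ps"

lemma descending_cover_path_exists:
  fixes S :: "'a::order set"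
  assumes "finite S" "u \<in> S" "w \<in> S" "w \<le> u"
  shows "\<exists>ps. descending_cover_path S u w ps"
  using assms(1,2,4)
proof (induction u rule: finite_less_induct)
  case (less u)
  then have "u \<in> S" "w \<le> u" by simp_all
  show ?case
  proof (cases "u = w")
    case True
    then show ?thesis using \<open>u \<in> S\<close> unfolding descending_cover_path_def by (intro exI[of _ "[u]"]) auto
  next
    case False
    with \<open>w \<le> u\<close> have "w < u" by simp
    then obtain m where "w \<le> m" and cov: "covers_in S u m"
      using lower_cover_exists_above assms(1,3) \<open>u \<in> S\<close> by blast
    then have "m \<in> S" "m < u" unfolding covers_in_def by auto
    with \<open>w \<le> m\<close> obtain ps where ps: "hd ps = m" "last ps = w" "ps \<noteq> []" "distinct ps"
      "set ps \<subseteq> S" "\<forall>v\<in>set ps. w \<le> v \<and> v \<le> m" "successively (covers_in S) ps"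
      using less.IH unfolding descending_cover_path_def by blast
    have "successively (covers_in S) (u # ps)" using ps(1,3,7) cov by (simp add: successively_Cons)
    moreover have below: "\<forall>v\<in>set ps. w \<le> v \<and> v < u"
      using ps(6) \<open>m < u\<close> by (blast intro: le_less_trans)
    then have "distinct (u # ps)" using ps(4) by auto
    moreover have "\<forall>v\<in>set (u # ps). w \<le> v \<and> v \<le> u" using below \<open>w < u\<close> by auto
    moreover have "set (u # ps) \<subseteq> S" using ps(5) \<open>u \<in> S\<close> by simp
    ultimately show ?thesis
      using ps(2,3) unfolding descending_cover_path_def by (intro exI[of _ "u # ps"]) simp
  qed
qed

lemma join_irreducible_least:
  fixes z :: "'a::lattice"
  assumes "\<forall>x. z \<le> x"
  shows "z \<in> JI"
  unfolding JI_def join_irreducible_def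
proof (intro CollectI allI impI)
  fix y y' assume "z = sup y y'"
  then have "y \<le> z" by simp
  with assms show "z = y \<or> z = y'" by (simp add: order.antisym)
qed

lemma le_if_join_irreducibles_le:
  fixes x b :: "'a::{lattice,finite}"
  assumes "\<forall>j\<in>JI. j \<le> x \<longrightarrow> j \<le> b"
  shows "x \<le> b"
  using finite_UNIV UNIV_I assms
proof (induction x rule: finite_less_induct)
  case (less x)
  show ?case
  proof (cases "x \<in> JI")
    case True
    then show ?thesis using less.prems by simp
  next
    case False
    then obtain y z where yz: "x = sup y z" "x \<noteq> y" "x \<noteq> z"
      unfolding JI_def join_irreducible_def by auto
    then have "y < x" "z < x" by (auto simp: less_le)
    have "v \<le> b" if "v < x" for v
    proof -
      have "\<forall>j\<in>JI. j \<le> v \<longrightarrow> j \<le> b" using less.prems that by (meson less_imp_le order.trans)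
      with that show ?thesis using less.IH by blast
    qed
    with \<open>y < x\<close> \<open>z < x\<close> have "y \<le> b" "z \<le> b" by blast+
    then show ?thesis using yz by simp
  qed
qed

definition unique_lower_covers :: "'a::order set \<Rightarrow> bool" where
  "unique_lower_covers S \<longleftrightarrow> (\<forall>a b c. covers_in S a b \<longrightarrow> covers_in S a c \<longrightarrow> b = c)"

lemma honest_lattice_iff_unique_lower_covers:
  "honest_lattice TYPE('a::{lattice,finite}) \<longleftrightarrow> unique_lower_covers (JI :: 'a set)"
proof
  assume honest: "honest_lattice TYPE('a)"
  show "unique_lower_covers (JI :: 'a set)" unfolding unique_lower_covers_def
  proof (intro allI impI)
    fix a b c :: 'a
    assume ab: "covers_in JI a b" and ac: "covers_in JI a c"
    show "b = c"
    proof (rule ccontr)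
      assume "b \<noteq> c"
      with ab ac have "\<not> c \<le> b" unfolding covers_in_def by (auto simp: less_le)
      then have "b < sup b c" by (metis less_le sup.cobounded1 sup.cobounded2)
      moreover have "sup b c \<le> a" using ab ac unfolding covers_in_def by auto
      moreover have "covers_in UNIV a b" using honest ab unfolding honest_lattice_def by blast
      ultimately have "a = sup b c" unfolding covers_in_def by (metis UNIV_I order_le_less)
      moreover have "join_irreducible a" using ab unfolding covers_in_def JI_def by auto
      ultimately have "a = b \<or> a = c" unfolding join_irreducible_def by blast
      then show False using ab ac unfolding covers_in_def by auto
    qed
  qed
next
  assume unique: "unique_lower_covers (JI :: 'a set)"
  show "honest_lattice TYPE('a)" unfolding honest_lattice_def
  proof (intro allI impI)
    fix a b :: 'a
    assume ab: "covers_in JI a b"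
    have "\<not> (b < c \<and> c < a)" for c
    proof
      assume c: "b < c \<and> c < a"
      have "\<forall>j\<in>JI. j \<le> c \<longrightarrow> j \<le> b"
      proof (intro ballI impI)
        fix j assume j: "j \<in> JI" "j \<le> c"
        with c have "j < a" by (auto intro: le_less_trans)
        then obtain m where "j \<le> m" "covers_in JI a m"
          using lower_cover_exists_above[of "JI :: 'a set" j a] j ab
          unfolding covers_in_def by auto
        then show "j \<le> b" using unique ab unfolding unique_lower_covers_def by metis
      qed
      then have "c \<le> b" by (rule le_if_join_irreducibles_le)
      then show False using c by auto
    qed
    then show "covers_in UNIV a b" using ab unfolding covers_in_def by auto
  qed
qed

lemma hasse_connected_if_least:
  fixes S :: "'a::order set"
  assumes "finite S" "z \<in> S" "\<forall>x\<in>S. z \<le> x"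
  shows "ugraph_connected S (hasse_adj S)"
proof -
  let ?R = "{(u, v). u \<in> S \<and> v \<in> S \<and> hasse_adj S u v}"
  have "(x, z) \<in> ?R\<^sup>* \<and> (z, x) \<in> ?R\<^sup>*" if "x \<in> S" for x
    using assms(1) that
  proof (induction x rule: finite_less_induct)
    case (less x)
    show ?case
    proof (cases "x = z")
      case False
      with assms(3) less.hyps have "z < x" by (auto simp: less_le)
      then obtain m where cov: "covers_in S x m"
        using lower_cover_exists_above assms(1,2) less.hyps by blast
      then have "m \<in> S" "m < x" unfolding covers_in_def by auto
      then have "(m, z) \<in> ?R\<^sup>* \<and> (z, m) \<in> ?R\<^sup>*" using less.IH by blast
      moreover have "(x, m) \<in> ?R" "(m, x) \<in> ?R"
        using cov \<open>m \<in> S\<close> less.hyps unfolding hasse_adj_def by auto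
      ultimately show ?thesis
        by (meson converse_rtrancl_into_rtrancl rtrancl.rtrancl_into_rtrancl)
    qed simp
  qed
  then show ?thesis unfolding ugraph_connected_def by (meson rtrancl_trans)
qed

lemma hasse_acyclic_if_unique_lower_covers:
  fixes S :: "'a::order set"
  assumes "unique_lower_covers S"
  shows "\<not> ugraph_has_cycle S (hasse_adj S)"
proof
  assume "ugraph_has_cycle S (hasse_adj S)"
  then obtain vs where vs: "length vs \<ge> 3" "distinct vs"
    "\<forall>i. Suc i < length vs \<longrightarrow> hasse_adj S (vs ! i) (vs ! Suc i)"
    "hasse_adj S (last vs) (hd vs)"
    unfolding ugraph_has_cycle_def by blast
  define n where "n = length vs"
  have closing: "hasse_adj S (vs ! (n - 1)) (vs ! 0)"
    using vs(1,4) by (metis hd_conv_nth last_conv_nth list.size(3) n_def not_numeral_le_zero)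
  obtain v where "v \<in> set vs" and top: "\<forall>b\<in>set vs. v \<le> b \<longrightarrow> v = b"
    using finite_has_maximal[of "set vs"] vs(1) by fastforce
  then obtain k where k: "k < n" "vs ! k = v" by (auto simp: in_set_conv_nth n_def)
  define p where "p = (if k = 0 then n - 1 else k - 1)"
  define q where "q = (if k = n - 1 then 0 else k + 1)"
  have "p < n" "q < n" "p \<noteq> q" using k vs(1) by (auto simp: p_def q_def n_def)
  have cover_below_top: "covers_in S v a" if "a \<in> set vs" "hasse_adj S a v \<or> hasse_adj S v a" for a
    using that top unfolding hasse_adj_def covers_in_def by (metis less_le)
  have "hasse_adj S (vs ! p) v"
  proof (cases "k = 0")
    case False
    then have "Suc (k - 1) < n" "Suc (k - 1) = k" using k by auto
    then show ?thesis using vs(3) k False by (metis p_def n_def)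
  qed (use closing k in \<open>simp add: p_def\<close>)
  moreover have "hasse_adj S v (vs ! q)"
    using closing vs(3) k by (cases "k = n - 1") (auto simp: q_def n_def)
  moreover have "vs ! p \<in> set vs" "vs ! q \<in> set vs"
    using \<open>p < n\<close> \<open>q < n\<close> by (simp_all add: n_def)
  ultimately have "covers_in S v (vs ! p)" "covers_in S v (vs ! q)"
    using cover_below_top by blast+
  then have "vs ! p = vs ! q" using assms unfolding unique_lower_covers_def by blast
  with vs(2) \<open>p < n\<close> \<open>q < n\<close> \<open>p \<noteq> q\<close> show False by (simp add: nth_eq_iff_index_eq n_def)
qed

lemma hasse_cycle_if_lower_covers_meet:
  fixes S :: "'a::order set"
  assumes xy: "covers_in S x y" and xy': "covers_in S x y'"
    and "descending_cover_path S y w ps" "descending_cover_path S y' w qs"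
    and meet: "set ps \<inter> set qs = {w}" and "w \<noteq> y" "w \<noteq> y'"
  shows "ugraph_has_cycle S (hasse_adj S)"
proof -
  have ps: "hd ps = y" "last ps = w" "ps \<noteq> []" "distinct ps" "set ps \<subseteq> S"
    "\<forall>v\<in>set ps. v \<le> y" "successively (covers_in S) ps"
    using assms(3) unfolding descending_cover_path_def by auto
  have qs: "hd qs = y'" "last qs = w" "qs \<noteq> []" "distinct qs" "set qs \<subseteq> S"
    "\<forall>v\<in>set qs. v \<le> y'" "successively (covers_in S) qs"
    using assms(4) unfolding descending_cover_path_def by auto
  have "y < x" "y' < x" using xy xy' unfolding covers_in_def by auto
  define qs' where "qs' = butlast qs"
  have qs_split: "qs = qs' @ [w]" using qs(2,3) unfolding qs'_def by (metis append_butlast_last_id)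
  have "qs' \<noteq> []" "hd qs' = y'" using qs_split qs(1) \<open>w \<noteq> y'\<close> by (cases qs'; auto)+
  have "length ps \<ge> 2" using ps(1-3) \<open>w \<noteq> y\<close> by (cases ps rule: remdups_adj.cases) auto
  have "successively (covers_in S) qs'" "covers_in S (last qs') w"
    using qs(7) qs_split \<open>qs' \<noteq> []\<close> by (auto simp: successively_append_iff)
  define vs where "vs = x # ps @ rev qs'"
  have "x \<notin> set ps" "x \<notin> set qs'"
    using ps(6) qs(6) qs_split \<open>y < x\<close> \<open>y' < x\<close> by (auto simp: less_le_not_le)
  moreover have "set ps \<inter> set qs' = {}" "distinct qs'" using meet qs(4) qs_split by auto
  ultimately have "distinct vs" using ps(4) by (auto simp: vs_def)
  moreover have "successively (hasse_adj S) vs"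
    unfolding vs_def using ps \<open>successively (covers_in S) qs'\<close> \<open>covers_in S (last qs') w\<close>
      \<open>qs' \<noteq> []\<close> xy
    by (auto simp: successively_Cons successively_append_iff hasse_adj_def hd_append
        last_rev hd_rev intro: successively_mono)
  moreover have "hasse_adj S (last vs) (hd vs)"
    using \<open>qs' \<noteq> []\<close> \<open>hd qs' = y'\<close> xy' by (simp add: vs_def last_rev hasse_adj_def)
  moreover have "length vs \<ge> 3" "set vs \<subseteq> S"
    using \<open>length ps \<ge> 2\<close> \<open>qs' \<noteq> []\<close> xy ps(5) qs(5) qs_split
    by (auto simp: vs_def covers_in_def)
  ultimately show ?thesis unfolding ugraph_has_cycle_def successively_conv_nth by blast
qed

lemma unique_lower_covers_if_hasse_acyclic:
  fixes S :: "'a::order set"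
  assumes fin: "finite S" and "z \<in> S" "\<forall>x\<in>S. z \<le> x"
    and acyclic: "\<not> ugraph_has_cycle S (hasse_adj S)"
  shows "unique_lower_covers S"
  unfolding unique_lower_covers_def
proof (intro allI impI, rule ccontr)
  fix x y y'
  assume xy: "covers_in S x y" and xy': "covers_in S x y'" and "y \<noteq> y'"
  then have "y \<in> S" "y' \<in> S" unfolding covers_in_def by auto
  let ?D = "{w\<in>S. w \<le> y \<and> w \<le> y'}"
  obtain w where w: "w \<in> ?D" and wmax: "\<forall>b\<in>?D. w \<le> b \<longrightarrow> w = b"
    using finite_has_maximal[of ?D] fin assms(2,3) \<open>y \<in> S\<close> \<open>y' \<in> S\<close> by auto
  have "w \<noteq> y" "w \<noteq> y'"
    using w xy xy' \<open>y \<noteq> y'\<close> unfolding covers_in_def by (auto simp: less_le)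
  obtain ps qs where ps: "descending_cover_path S y w ps"
    and qs: "descending_cover_path S y' w qs"
    using descending_cover_path_exists[OF fin] \<open>y \<in> S\<close> \<open>y' \<in> S\<close> w by blast
  have "w \<in> set ps" "w \<in> set qs"
    using ps qs unfolding descending_cover_path_def by (metis last_in_set)+
  \<comment> \<open>a common vertex is a common lower bound of \<open>y, y'\<close> above \<open>w\<close>, hence \<open>w\<close> by maximality\<close>
  moreover have "v = w" if "v \<in> set ps" "v \<in> set qs" for v
    using that ps qs wmax unfolding descending_cover_path_def by blast
  ultimately have "set ps \<inter> set qs = {w}" by blast
  then have "ugraph_has_cycle S (hasse_adj S)"
    using hasse_cycle_if_lower_covers_meet xy xy' ps qs \<open>w \<noteq> y\<close> \<open>w \<noteq> y'\<close> by blast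
  with acyclic show False by contradiction
qed

lemma hasse_tree_iff_unique_lower_covers:
  fixes S :: "'a::order set"
  assumes "finite S" "z \<in> S" "\<forall>x\<in>S. z \<le> x"
  shows "ugraph_tree S (hasse_adj S) \<longleftrightarrow> unique_lower_covers S"
  using assms hasse_connected_if_least hasse_acyclic_if_unique_lower_covers
    unique_lower_covers_if_hasse_acyclic
  unfolding ugraph_tree_def by blast

theorem mainTheorem4:
  shows "tree_lattice TYPE('a::{distrib_lattice, finite}) \<longleftrightarrow> honest_lattice TYPE('a)"
proof -
  have least: "\<forall>x. Inf_fin UNIV \<le> (x :: 'a)" by (simp add: Inf_fin.coboundedI)
  then have "Inf_fin UNIV \<in> (JI :: 'a set)" by (rule join_irreducible_least)
  with least have "tree_lattice TYPE('a) \<longleftrightarrow> unique_lower_covers (JI :: 'a set)"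
    unfolding tree_lattice_def by (intro hasse_tree_iff_unique_lower_covers) auto
  then show ?thesis by (simp add: honest_lattice_iff_unique_lower_covers)
qed

end
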